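(* Let $G=(V,E)$ be an $r$-regular graph on a finite vertex set $V$ with $|V|$ even, and let $d\mapsto\{H(d),A(d)\}$, $d\in\{1,\dots,r\}$, be a HAP table. Then $P(G,HA)$ is non-empty if and only if there exists $v\in\overline{\mathbf N}(PM(V))$ such that $v|_K=\chi_E$ and $v(c)=|\{d\in\{1,\dots,r\}: \{H(d),A(d)\}=c\}|$ for every $c\in C$.
   Context: Let $V$ be a finite set with $|V|$ even. $K=\binom{V}{2}$ is the set of 2-element subsets of $V$. An equal partition of $V$ is an unordered pair $\{H,A\}$ of disjoint subsets with $H\cup A=V$ and $|H|=|A|=|V|/2$; $C=C(V)$ is the set of equal partitions. For $c=\{H,A\}\in C$, $B_c$ is the complete bipartite graph with parts $H$ and $A$. Vectors live in $\mathbb N^{K\cup C}$ with $\mathbb N=\{0,1,2,\dots\}$; $v|_K$ denotes the restriction to coordinates in $K$. For $E\subseteq K$, $\chi_E\in\{0,1\}^K$ is its indicator vector. For $E\subseteq K$ and $c\in C$, $\chi_{E,c}\in\mathbb N^{K\cup C}$ has $K$-components $\chi_E$ and $C$-components equal to the indicator of $c$. $PM(V)=\{\chi_{q,c}: c\in C,\ q\text{ a perfect matching of }B_c\}$. For $\mathcal M\subseteq\mathbb N^{K\cup C}$, $\mathbf N(\mathcal M)$ is the set of finite nonnegative integer combinations of elements of $\mathcal M$, and $\overline{\mathbf N}(\mathcal M)=\{v\in\mathbb N^{K\cup C}: kv\in\mathbf N(\mathcal M)\text{ for some integer }k\ge1\}$. For an $r$-regular graph $G=(V,E)$, a HAP table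 is a map assigning to each $d\in\{1,\dots,r\}$ an equal partition $\{H(d),A(d)\}\in C$. $P(G,HA)$ is the set of real vectors $(x_{e,d})_{e\in K,\,d\in\{1,\dots,r\}}$ satisfying: (1) $\sum_{d=1}^r x_{e,d}=1$ for every $e\in E$, and $x_{e,d}=0$ for every $e\in K\setminus E$ and every $d$; (2) for every $d$ and every $a\in V$, $\sum_{b\in V\setminus\{a\}}x_{\{a,b\},d}=1$; (3) $0\le x_{e,d}\le1$ for all $e\in E$ and all $d$; (4) $x_{\{a,b\},d}=0$ whenever $\{a,b\}\in E$ and $a,b$ are both in $H(d)$ or both in $A(d)$. *)

theory Defs
  imports Complex_Main
begin

definition pairsK :: "'a set \<Rightarrow> 'a set set" where
  "pairsK V = {e. \<exists>a b. a \<in> V \<and> b \<in> V \<and> a \<noteq> b \<and> e = {a, b}}"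

text \<open>C(V): equal partitions, an unordered pair {H,A} represented as the set {H,A}.\<close>
definition eq_parts :: "'a set \<Rightarrow> 'a set set set" where
  "eq_parts V = {{H, A} | H A. H \<inter> A = {} \<and> H \<union> A = V
                 \<and> card H = card V div 2 \<and> card A = card V div 2}"

definition bip_edges :: "'a set set \<Rightarrow> 'a set set" where
  "bip_edges c = {{a, b} | a b. \<exists>H A. c = {H, A} \<and> H \<inter> A = {} \<and> a \<in> H \<and> b \<in> A}"

definition perfect_matching_of :: "'a set \<Rightarrow> 'a set set \<Rightarrow> 'a set set \<Rightarrow> bool" where
  "perfect_matching_of V c q \<longleftrightarrow> q \<subseteq> bip_edges c \<and> (\<forall>x\<in>V. \<exists>!e. e \<in> q \<and> x \<in> e)"

text \<open>Vectors in N^(K \<union> C): functions on the disjoint sum of coordinates, zero outside K \<union> C.\<close>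
type_synonym 'a vec = "('a set + 'a set set) \<Rightarrow> nat"

definition coordsKC :: "'a set \<Rightarrow> ('a set + 'a set set) set" where
  "coordsKC V = Inl ` pairsK V \<union> Inr ` eq_parts V"

definition is_vec :: "'a set \<Rightarrow> 'a vec \<Rightarrow> bool" where
  "is_vec V v \<longleftrightarrow> (\<forall>i. i \<notin> coordsKC V \<longrightarrow> v i = 0)"

definition chiEc :: "'a set \<Rightarrow> 'a set set \<Rightarrow> 'a set set \<Rightarrow> 'a vec" where
  "chiEc V E c = (\<lambda>i. case i of
       Inl e \<Rightarrow> (if e \<in> pairsK V \<and> e \<in> E then 1 else 0)
     | Inr c' \<Rightarrow> (if c' \<in> eq_parts V \<and> c' = c then 1 else 0))"

definition PM :: "'a set \<Rightarrow> 'a vec set" where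
  "PM V = {chiEc V q c | q c. c \<in> eq_parts V \<and> perfect_matching_of V c q}"

definition Ncomb :: "'a vec set \<Rightarrow> 'a vec set" where
  "Ncomb M = {v. \<exists>S f. finite S \<and> S \<subseteq> M \<and> v = (\<lambda>i. \<Sum>m\<in>S. f m * m i)}"

definition Nbar :: "'a set \<Rightarrow> 'a vec set \<Rightarrow> 'a vec set" where
  "Nbar V M = {v. is_vec V v \<and> (\<exists>k::nat. k \<ge> 1 \<and> (\<lambda>i. k * v i) \<in> Ncomb M)}"

definition regular_graph :: "'a set \<Rightarrow> 'a set set \<Rightarrow> nat \<Rightarrow> bool" where
  "regular_graph V E r \<longleftrightarrow> E \<subseteq> pairsK V \<and> (\<forall>a\<in>V. card {e\<in>E. a \<in> e} = r)"

definition HAP_table :: "'a set \<Rightarrow> nat \<Rightarrow> (nat \<Rightarrow> 'a set) \<Rightarrow> (nat \<Rightarrow> 'a set) \<Rightarrow> bool" where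
  "HAP_table V r H A \<longleftrightarrow> (\<forall>d\<in>{1..r}. {H d, A d} \<in> eq_parts V \<and> H d \<inter> A d = {} \<and> H d \<union> A d = V)"

definition P_GHA :: "'a set \<Rightarrow> 'a set set \<Rightarrow> nat \<Rightarrow> (nat \<Rightarrow> 'a set) \<Rightarrow> (nat \<Rightarrow> 'a set)
    \<Rightarrow> ('a set \<Rightarrow> nat \<Rightarrow> real) set" where
  "P_GHA V E r H A = {x.
     (\<forall>e\<in>E. (\<Sum>d=1..r. x e d) = 1) \<and>
     (\<forall>e\<in>pairsK V - E. \<forall>d\<in>{1..r}. x e d = 0) \<and>
     (\<forall>d\<in>{1..r}. \<forall>a\<in>V. (\<Sum>b\<in>V - {a}. x {a, b} d) = 1) \<and>
     (\<forall>e\<in>E. \<forall>d\<in>{1..r}. 0 \<le> x e d \<and> x e d \<le> 1) \<and>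
     (\<forall>a b d. {a, b} \<in> E \<and> d \<in> {1..r} \<and>
        ((a \<in> H d \<and> b \<in> H d) \<or> (a \<in> A d \<and> b \<in> A d)) \<longrightarrow> x {a, b} d = 0)}"

end

theory Submission
  imports Defs
begin

text \<open>
  Forward direction.  P(G,HA) is a polytope given by rational linear equations and
  nonnegativity, so if it is non-empty it has a rational point y; rational points are dense
  in the solution set of a rational linear system (Gaussian elimination), and a point close
  enough to a real solution, with the same zero pattern, stays nonnegative.  Scaling by a
  common denominator k, each colour class d of k y is a k-regular bipartite multigraph
  between H(d) and A(d); by Hall's marriage theorem it decomposes into k perfect matchings
  of B_{H(d),A(d)} (Koenig).  Summing all these matchings gives k times the target vector.

  Backward direction.  If k v = sum of f(m) m over finitely many m in PM(V), spread every
  matching m of class c with weight f(m)/k evenly over the colours d of class c; the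
  resulting x satisfies all constraints of P(G,HA).
\<close>

lemma hall_condition_after_matching_one:
  assumes finI: "finite I" and fin: "\<forall>j\<in>I. finite (S j)" and i: "i \<in> I"
    and surplus: "\<forall>J. J \<subseteq> I \<and> J \<noteq> {} \<and> J \<noteq> I \<longrightarrow> card J < card (\<Union>(S ` J))"
  shows "\<forall>J\<subseteq>I - {i}. card J \<le> card (\<Union>((\<lambda>j. S j - {x}) ` J))"
proof (intro allI impI)
  fix J assume J: "J \<subseteq> I - {i}"
  show "card J \<le> card (\<Union>((\<lambda>j. S j - {x}) ` J))"
  proof (cases "J = {}")
    case False
    have JI: "J \<subseteq> I" "J \<noteq> I" using J i by auto
    with False surplus have lt: "card J < card (\<Union>(S ` J))" by blast
    have le: "card (\<Union>(S ` J)) - 1 \<le> card (\<Union>(S ` J) - {x})"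
      by (simp add: card_Diff_singleton_if)
    have eq: "\<Union>((\<lambda>j. S j - {x}) ` J) = \<Union>(S ` J) - {x}" by auto
    have "card J \<le> card (\<Union>(S ` J) - {x})" using lt le by linarith
    then show ?thesis by (simp only: eq)
  qed simp
qed

lemma hall_condition_after_tight_set:
  assumes finI: "finite I" and fin: "\<forall>j\<in>I. finite (S j)"
    and hall: "\<forall>K\<subseteq>I. card K \<le> card (\<Union>(S ` K))"
    and J: "J \<subseteq> I" and tight: "card (\<Union>(S ` J)) = card J"
  shows "\<forall>K\<subseteq>I - J. card K \<le> card (\<Union>((\<lambda>j. S j - \<Union>(S ` J)) ` K))"
proof (intro allI impI)
  fix K assume K: "K \<subseteq> I - J"
  define N where "N = \<Union>(S ` J)"
  have finK: "finite K" and finJ: "finite J" using K J finI finite_subset by blast+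
  have finSK: "finite (\<Union>((\<lambda>j. S j - N) ` K))" using finK K fin by auto
  have finN: "finite N" using finJ J fin unfolding N_def by auto
  have "card K + card J = card (K \<union> J)"
    using K finK finJ by (subst card_Un_disjoint) auto
  also have "\<dots> \<le> card (\<Union>(S ` (K \<union> J)))" using hall K J by blast
  also have "\<Union>(S ` (K \<union> J)) = \<Union>((\<lambda>j. S j - N) ` K) \<union> N" unfolding N_def by auto
  also have "card \<dots> = card (\<Union>((\<lambda>j. S j - N) ` K)) + card N"
    using finSK finN by (subst card_Un_disjoint) auto
  finally show "card K \<le> card (\<Union>((\<lambda>j. S j - \<Union>(S ` J)) ` K))"
    using tight unfolding N_def by simp
qed

text \<open>Hall's marriage theorem for a finite family of finite sets, by induction on the size
  of the family, splitting at a tight subfamily if there is one.\<close>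

theorem hall_marriage:
  assumes "finite I" and "\<forall>i\<in>I. finite (S i)" and "\<forall>J\<subseteq>I. card J \<le> card (\<Union>(S ` J))"
  shows "\<exists>f. inj_on f I \<and> (\<forall>i\<in>I. f i \<in> S i)"
  using assms
proof (induction "card I" arbitrary: I S rule: less_induct)
  case less
  note finI = less.prems(1) and fin = less.prems(2) and hall = less.prems(3)
  consider (empty) "I = {}"
    | (surplus) "I \<noteq> {}" "\<forall>J. J \<subseteq> I \<and> J \<noteq> {} \<and> J \<noteq> I \<longrightarrow> card J < card (\<Union>(S ` J))"
    | (tight) J where "J \<subseteq> I" "J \<noteq> {}" "J \<noteq> I" "card (\<Union>(S ` J)) = card J"
    using hall by (meson le_antisym not_less)
  then show ?case
  proof cases
    case empty
    then show ?thesis by simp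
  next
    case surplus
    then obtain i where i: "i \<in> I" by blast
    have "card {i} \<le> card (S i)" using hall[rule_format, of "{i}"] i by simp
    then obtain x where x: "x \<in> S i" by fastforce
    have "card (I - {i}) < card I" using finI i by (rule card_Diff1_less)
    with hall_condition_after_matching_one[OF finI fin i surplus(2)] finI fin
    obtain f where f: "inj_on f (I - {i})" "\<forall>j\<in>I - {i}. f j \<in> S j - {x}"
      using less.hyps[of "I - {i}" "\<lambda>j. S j - {x}"] by auto
    have "inj_on (f(i := x)) (insert i (I - {i}))"
      using f by (auto simp: inj_on_def)
    moreover have "insert i (I - {i}) = I" using i by blast
    moreover have "\<forall>j\<in>I. (f(i := x)) j \<in> S j" using f(2) x by auto
    ultimately show ?thesis by metis
  next
    case tight
    define N where "N = \<Union>(S ` J)"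
    have finJ: "finite J" using tight(1) finI by (rule finite_subset)
    have "card J < card I" using tight finI by (meson psubset_card_mono psubsetI)
    with finJ obtain g where g: "inj_on g J" "\<forall>j\<in>J. g j \<in> S j"
      using less.hyps[of J S] tight(1) fin hall by auto
    have "card (I - J) = card I - card J" using finJ tight(1) by (rule card_Diff_subset)
    moreover have "0 < card J" "card J \<le> card I"
      using tight(1,2) finJ finI by (auto simp: card_gt_0_iff card_mono)
    ultimately have "card (I - J) < card I" by linarith
    with hall_condition_after_tight_set[OF finI fin hall tight(1,4)] finI fin
    obtain h where h: "inj_on h (I - J)" "\<forall>j\<in>I - J. h j \<in> S j - N"
      using less.hyps[of "I - J" "\<lambda>j. S j - N"] unfolding N_def by auto
    define f where "f = (\<lambda>j. if j \<in> J then g j else h j)"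
    have "f ` (J - (I - J)) \<inter> f ` ((I - J) - J) = {}"
      using g(2) h(2) unfolding f_def N_def by fastforce
    moreover have "inj_on f J" "inj_on f (I - J)"
      using g(1) h(1) by (auto simp: f_def inj_on_def)
    ultimately have "inj_on f (J \<union> (I - J))" unfolding inj_on_Un by blast
    moreover have "J \<union> (I - J) = I" using tight(1) by blast
    moreover have "\<forall>j\<in>I. f j \<in> S j" using g(2) h(2) unfolding f_def by auto
    ultimately show ?thesis by metis
  qed
qed

lemma eq_parts_intro:
  assumes "finite V" "H \<inter> A = {}" "H \<union> A = V" "card H = card A"
  shows "{H, A} \<in> eq_parts V"
proof -
  have "card V = card H + card A" using assms by (metis card_Un_disjoint finite_Un)
  then show ?thesis unfolding eq_parts_def using assms by auto
qed

lemma eq_parts_card_eq: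
  assumes "{H, A} \<in> eq_parts V"
  shows "card H = card A"
  using assms unfolding eq_parts_def by (auto simp: doubleton_eq_iff)

lemma bip_edge_in_pairsK:
  assumes "c \<in> eq_parts V" "e \<in> bip_edges c"
  shows "e \<in> pairsK V"
proof -
  obtain a b X Y where e: "e = {a, b}" "c = {X, Y}" "X \<inter> Y = {}" "a \<in> X" "b \<in> Y"
    using assms(2) unfolding bip_edges_def by blast
  obtain H A where "c = {H, A}" "H \<union> A = V" using assms(1) unfolding eq_parts_def by blast
  with e have "X \<subseteq> V" "Y \<subseteq> V" by (auto simp: doubleton_eq_iff)
  with e show ?thesis unfolding pairsK_def by blast
qed

lemma perfect_matching_partner:
  assumes "perfect_matching_of V c q" "c \<in> eq_parts V" "a \<in> V"
  obtains b0 where "b0 \<in> V - {a}" "\<And>b. b \<in> V - {a} \<Longrightarrow> {a, b} \<in> q \<longleftrightarrow> b = b0"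
proof -
  from assms(1,3) obtain e where e: "e \<in> q" "a \<in> e" and unique: "\<And>e'. e' \<in> q \<Longrightarrow> a \<in> e' \<Longrightarrow> e' = e"
    unfolding perfect_matching_of_def by metis
  have "e \<in> pairsK V"
    using e(1) assms(1,2) bip_edge_in_pairsK unfolding perfect_matching_of_def by blast
  then obtain b0 where b0: "b0 \<in> V - {a}" "e = {a, b0}"
    using e(2) unfolding pairsK_def by auto
  have "{a, b} \<in> q \<longleftrightarrow> b = b0" if "b \<in> V - {a}" for b
    using that unique[of "{a, b}"] b0 e(1) by (auto simp: doubleton_eq_iff)
  with b0 show ?thesis using that by blast
qed

lemma perfect_matching_degree:
  assumes "perfect_matching_of V c q" "c \<in> eq_parts V" "a \<in> V" "finite V"
  shows "(\<Sum>b\<in>V - {a}. if {a, b} \<in> q then 1 else 0) = (1 :: 'n :: comm_semiring_1)"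
proof -
  obtain b0 where b0: "b0 \<in> V - {a}" "\<And>b. b \<in> V - {a} \<Longrightarrow> {a, b} \<in> q \<longleftrightarrow> b = b0"
    using perfect_matching_partner[OF assms(1-3)] by blast
  have "(\<Sum>b\<in>V - {a}. if {a, b} \<in> q then 1 else 0) = (\<Sum>b\<in>V - {a}. if b = b0 then (1 :: 'n) else 0)"
    using b0(2) by (intro sum.cong) auto
  also have "\<dots> = 1" using b0(1) assms(4) by (simp add: sum.delta')
  finally show ?thesis .
qed

lemma perfect_matching_of_bijection:
  assumes "H \<inter> A = {}" "bij_betw f H A"
  shows "perfect_matching_of (H \<union> A) {H, A} {{a, f a} | a. a \<in> H}"
  unfolding perfect_matching_of_def
proof
  show "{{a, f a} | a. a \<in> H} \<subseteq> bip_edges {H, A}"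
    using assms unfolding bip_edges_def bij_betw_def by blast
  show "\<forall>x\<in>H \<union> A. \<exists>!e. e \<in> {{a, f a} | a. a \<in> H} \<and> x \<in> e"
  proof
    fix x assume "x \<in> H \<union> A"
    then obtain a0 where a0: "a0 \<in> H" "x = a0 \<or> x = f a0"
      using assms(2) unfolding bij_betw_def by blast
    show "\<exists>!e. e \<in> {{a, f a} | a. a \<in> H} \<and> x \<in> e"
    proof (rule ex1I[of _ "{a0, f a0}"])
      show "{a0, f a0} \<in> {{a, f a} | a. a \<in> H} \<and> x \<in> {a0, f a0}" using a0 by blast
    next
      fix e assume "e \<in> {{a, f a} | a. a \<in> H} \<and> x \<in> e"
      then obtain a where a: "a \<in> H" "e = {a, f a}" "x \<in> e" by blast
      have "f a \<in> A" "f a0 \<in> A" using a(1) a0(1) assms(2) unfolding bij_betw_def by blast+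
      then have "a = a0"
        using a a0 assms unfolding bij_betw_def inj_on_def by auto
      then show "e = {a0, f a0}" using a(2) by simp
    qed
  qed
qed

lemma sum_over_other_side:
  fixes u :: "'a set \<Rightarrow> 'n :: comm_monoid_add"
  assumes "finite V" "X \<inter> Y = {}" "X \<union> Y = V" "a \<in> X" "\<forall>b\<in>X. u {a, b} = 0"
  shows "(\<Sum>b\<in>V - {a}. u {a, b}) = (\<Sum>b\<in>Y. u {a, b})"
proof -
  have "V - {a} = Y \<union> (X - {a})" "Y \<inter> (X - {a}) = {}" using assms(2-4) by blast+
  moreover have "finite Y" "finite (X - {a})" using assms(1,3) by auto
  ultimately show ?thesis using assms(5) by (simp add: sum.union_disjoint)
qed

text \<open>Double counting: a bipartite weight matrix with all row and column sums equal to k > 0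
  satisfies Hall's condition for the supports of its rows.\<close>
lemma regular_bipartite_hall:
  fixes u :: "'a \<Rightarrow> 'b \<Rightarrow> nat"
  assumes finX: "finite X" and finY: "finite Y" and k: "0 < k"
    and rows: "\<forall>a\<in>X. (\<Sum>b\<in>Y. u a b) = k" and cols: "\<forall>b\<in>Y. (\<Sum>a\<in>X. u a b) = k"
  shows "\<forall>Z\<subseteq>X. card Z \<le> card (\<Union>a\<in>Z. {b\<in>Y. 0 < u a b})"
proof (intro allI impI)
  fix Z assume Z: "Z \<subseteq> X"
  define N where "N = (\<Union>a\<in>Z. {b\<in>Y. 0 < u a b})"
  have NY: "N \<subseteq> Y" unfolding N_def by blast
  have "k * card Z = (\<Sum>a\<in>Z. \<Sum>b\<in>Y. u a b)" using rows Z by (simp add: subset_iff)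
  also have "\<dots> = (\<Sum>a\<in>Z. \<Sum>b\<in>N. u a b)"
    by (intro sum.cong refl sum.mono_neutral_right[OF finY NY]) (auto simp: N_def)
  also have "\<dots> = (\<Sum>b\<in>N. \<Sum>a\<in>Z. u a b)" by (rule sum.swap)
  also have "\<dots> \<le> (\<Sum>b\<in>N. \<Sum>a\<in>X. u a b)"
    by (intro sum_mono sum_mono2[OF finX Z]) auto
  also have "\<dots> = k * card N" using cols NY by (simp add: subset_iff)
  finally show "card Z \<le> card N" using k by simp
qed

lemma regular_bipartite_perfect_matching:
  fixes u :: "'a set \<Rightarrow> nat"
  assumes fin: "finite V" and HA: "H \<inter> A = {}" "H \<union> A = V" "card H = card A" and k: "0 < k"
    and deg: "\<forall>a\<in>V. (\<Sum>b\<in>V - {a}. u {a, b}) = k"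
    and bip: "\<forall>a\<in>V. \<forall>b\<in>V. 0 < u {a, b} \<longrightarrow> (a \<in> H \<and> b \<in> A) \<or> (a \<in> A \<and> b \<in> H)"
  obtains q where "perfect_matching_of V {H, A} q" "\<forall>e\<in>q. 0 < u e"
proof -
  have finH: "finite H" and finA: "finite A" using fin HA(2) by auto
  have rows: "\<forall>a\<in>H. (\<Sum>b\<in>A. u {a, b}) = k"
  proof
    fix a assume a: "a \<in> H"
    have "(\<Sum>b\<in>V - {a}. u {a, b}) = (\<Sum>b\<in>A. u {a, b})"
      using a HA bip by (intro sum_over_other_side[OF fin HA(1,2) a]) blast
    then show "(\<Sum>b\<in>A. u {a, b}) = k" using deg a HA(2) by auto
  qed
  have cols: "\<forall>b\<in>A. (\<Sum>a\<in>H. u {a, b}) = k"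
  proof
    fix b assume b: "b \<in> A"
    have "A \<inter> H = {}" "A \<union> H = V" using HA by auto
    then have "(\<Sum>a\<in>V - {b}. u {b, a}) = (\<Sum>a\<in>H. u {b, a})"
      using b HA bip by (intro sum_over_other_side[OF fin _ _ b]) blast+
    moreover have "(\<Sum>a\<in>V - {b}. u {b, a}) = k" using deg b HA(2) by blast
    moreover have "(\<lambda>a. u {b, a}) = (\<lambda>a. u {a, b})" by (simp add: insert_commute)
    ultimately show "(\<Sum>a\<in>H. u {a, b}) = k" by metis
  qed
  obtain f where f: "inj_on f H" "\<forall>a\<in>H. f a \<in> {b\<in>A. 0 < u {a, b}}"
    using hall_marriage[OF finH _ regular_bipartite_hall[OF finH finA k rows cols]] finA by auto
  have "f ` H \<subseteq> A" "card (f ` H) = card A" using f HA(3) by (auto simp: card_image)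
  then have "bij_betw f H A" using f(1) card_subset_eq[OF finA] unfolding bij_betw_def by blast
  then have "perfect_matching_of V {H, A} {{a, f a} | a. a \<in> H}"
    using perfect_matching_of_bijection[OF HA(1)] HA(2) by simp
  moreover have "\<forall>e\<in>{{a, f a} | a. a \<in> H}. 0 < u e" using f(2) by blast
  ultimately show ?thesis using that by blast
qed

lemma regular_bipartite_decomposition:
  fixes u :: "'a set \<Rightarrow> nat"
  assumes fin: "finite V" and HA: "H \<inter> A = {}" "H \<union> A = V" "card H = card A"
    and deg: "\<forall>a\<in>V. (\<Sum>b\<in>V - {a}. u {a, b}) = k"
    and bip: "\<forall>a\<in>V. \<forall>b\<in>V. 0 < u {a, b} \<longrightarrow> (a \<in> H \<and> b \<in> A) \<or> (a \<in> A \<and> b \<in> H)"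
  shows "\<exists>qs. (\<forall>j<k. perfect_matching_of V {H, A} (qs j)) \<and>
    (\<forall>a\<in>V. \<forall>b\<in>V. a \<noteq> b \<longrightarrow> u {a, b} = card {j. j < k \<and> {a, b} \<in> qs j})"
  using deg bip
proof (induction k arbitrary: u)
  case 0
  have "u {a, b} = 0" if "a \<in> V" "b \<in> V" "a \<noteq> b" for a b
    using 0(1) that fin by auto
  then show ?case by auto
next
  case (Suc k)
  obtain q where q: "perfect_matching_of V {H, A} q" "\<forall>e\<in>q. 0 < u e"
    using regular_bipartite_perfect_matching[OF fin HA _ Suc.prems] by blast
  have eqp: "{H, A} \<in> eq_parts V" using eq_parts_intro[OF fin HA] .
  define u' where "u' = (\<lambda>e. u e - (if e \<in> q then 1 else 0))"
  have u_split: "u e = u' e + (if e \<in> q then 1 else 0)" for e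
    using q(2) unfolding u'_def by (auto simp: Suc_le_eq)
  have "\<forall>a\<in>V. (\<Sum>b\<in>V - {a}. u' {a, b}) = k"
  proof
    fix a assume a: "a \<in> V"
    have "Suc k = (\<Sum>b\<in>V - {a}. u' {a, b}) + (\<Sum>b\<in>V - {a}. if {a, b} \<in> q then 1 else 0)"
      using Suc.prems(1) a by (simp add: u_split sum.distrib)
    then show "(\<Sum>b\<in>V - {a}. u' {a, b}) = k"
      using perfect_matching_degree[OF q(1) eqp a fin, where 'n = nat] by linarith
  qed
  moreover have "\<forall>a\<in>V. \<forall>b\<in>V. 0 < u' {a, b} \<longrightarrow> (a \<in> H \<and> b \<in> A) \<or> (a \<in> A \<and> b \<in> H)"
    using Suc.prems(2) unfolding u'_def by auto
  ultimately obtain qs where qs: "\<forall>j<k. perfect_matching_of V {H, A} (qs j)"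
    "\<forall>a\<in>V. \<forall>b\<in>V. a \<noteq> b \<longrightarrow> u' {a, b} = card {j. j < k \<and> {a, b} \<in> qs j}"
    using Suc.IH by blast
  have "\<forall>j<Suc k. perfect_matching_of V {H, A} ((qs(k := q)) j)"
    using qs(1) q(1) by (auto simp: less_Suc_eq)
  moreover have "u {a, b} = card {j. j < Suc k \<and> {a, b} \<in> (qs(k := q)) j}"
    if "a \<in> V" "b \<in> V" "a \<noteq> b" for a b
  proof -
    have "{j. j < Suc k \<and> {a, b} \<in> (qs(k := q)) j} =
        (if {a, b} \<in> q then insert k else id) {j. j < k \<and> {a, b} \<in> qs j}"
      by (auto simp: less_Suc_eq)
    then show ?thesis using qs(2) that u_split[of "{a, b}"] by simp
  qed
  ultimately show ?case by blast
qed

type_synonym 'i equation = "('i \<Rightarrow> real) \<times> real"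

definition solves :: "'i set \<Rightarrow> 'i equation set \<Rightarrow> ('i \<Rightarrow> real) \<Rightarrow> bool" where
  "solves I J x \<longleftrightarrow> (\<forall>j\<in>J. (\<Sum>i\<in>I. fst j i * x i) = snd j)"

definition rational_equations :: "'i equation set \<Rightarrow> bool" where
  "rational_equations J \<longleftrightarrow> (\<forall>j\<in>J. (\<forall>i. fst j i \<in> \<rat>) \<and> snd j \<in> \<rat>)"

definition eliminate :: "'i \<Rightarrow> 'i equation \<Rightarrow> 'i equation \<Rightarrow> 'i equation" where
  "eliminate i0 p j =
     ((\<lambda>i. fst j i - fst j i0 / fst p i0 * fst p i), snd j - fst j i0 / fst p i0 * snd p)"

lemma solves_Un: "solves I (J \<union> K) x \<longleftrightarrow> solves I J x \<and> solves I K x"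
  unfolding solves_def by blast

lemma rational_equations_eliminate:
  assumes "rational_equations J" "p \<in> J"
  shows "rational_equations (eliminate i0 p ` J)"
  using assms unfolding rational_equations_def eliminate_def
  by (auto intro!: Rats_diff Rats_mult Rats_divide)

lemma solves_eliminate_iff:
  assumes "finite I" "i0 \<notin> I" "fst p i0 \<noteq> 0"
    and p: "(\<Sum>i\<in>insert i0 I. fst p i * z i) = snd p"
  shows "(\<Sum>i\<in>insert i0 I. fst j i * z i) = snd j \<longleftrightarrow>
    (\<Sum>i\<in>I. fst (eliminate i0 p j) i * z i) = snd (eliminate i0 p j)"
proof -
  define c where "c = fst j i0 / fst p i0"
  have sum_p: "(\<Sum>i\<in>I. fst p i * z i) = snd p - fst p i0 * z i0" using p assms(1,2) by simp
  have c: "c * fst p i0 = fst j i0" using assms(3) unfolding c_def by simp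
  have "c * (\<Sum>i\<in>I. fst p i * z i) = c * snd p - fst j i0 * z i0"
    by (simp only: sum_p right_diff_distrib mult.assoc[symmetric] c)
  moreover have "(\<Sum>i\<in>I. fst (eliminate i0 p j) i * z i) =
      (\<Sum>i\<in>I. fst j i * z i) - c * (\<Sum>i\<in>I. fst p i * z i)"
    unfolding eliminate_def c_def by (simp add: sum_subtractf sum_distrib_left algebra_simps)
  moreover have "snd (eliminate i0 p j) = snd j - c * snd p" unfolding eliminate_def c_def by simp
  moreover have "(\<Sum>i\<in>insert i0 I. fst j i * z i) = fst j i0 * z i0 + (\<Sum>i\<in>I. fst j i * z i)"
    using assms(1,2) by simp
  ultimately show ?thesis by (intro iffI) linarith+
qed

lemma pivot_solution_close:
  fixes x y c :: "'i \<Rightarrow> real"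
  assumes "finite I" "a \<noteq> 0" "0 < \<epsilon>" and eq: "a * x0 + (\<Sum>i\<in>I. c i * x i) = b"
    and close: "\<forall>i\<in>I. \<bar>y i - x i\<bar> < \<epsilon> * \<bar>a\<bar> / (\<bar>a\<bar> + (\<Sum>i\<in>I. \<bar>c i\<bar>))"
  shows "\<bar>(b - (\<Sum>i\<in>I. c i * y i)) / a - x0\<bar> < \<epsilon>"
proof -
  define M where "M = (\<Sum>i\<in>I. \<bar>c i\<bar>)"
  define \<delta> where "\<delta> = \<epsilon> * \<bar>a\<bar> / (\<bar>a\<bar> + M)"
  have M: "0 \<le> M" unfolding M_def by (simp add: sum_nonneg)
  have "(b - (\<Sum>i\<in>I. c i * y i)) / a - x0 = - (\<Sum>i\<in>I. c i * (y i - x i)) / a"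
    using eq assms(2) by (simp add: field_simps sum_subtractf right_diff_distrib)
  then have "\<bar>(b - (\<Sum>i\<in>I. c i * y i)) / a - x0\<bar> = \<bar>\<Sum>i\<in>I. c i * (y i - x i)\<bar> / \<bar>a\<bar>"
    by simp
  also have "\<dots> \<le> M * \<delta> / \<bar>a\<bar>"
  proof (rule divide_right_mono)
    have "\<bar>\<Sum>i\<in>I. c i * (y i - x i)\<bar> \<le> (\<Sum>i\<in>I. \<bar>c i\<bar> * \<bar>y i - x i\<bar>)"
      using sum_abs[of "\<lambda>i. c i * (y i - x i)" I] by (simp add: abs_mult)
    also have "\<dots> \<le> (\<Sum>i\<in>I. \<bar>c i\<bar> * \<delta>)"
      using close unfolding \<delta>_def M_def by (intro sum_mono mult_left_mono) auto
    finally show "\<bar>\<Sum>i\<in>I. c i * (y i - x i)\<bar> \<le> M * \<delta>" unfolding M_def by (simp add: sum_distrib_right)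
  qed simp
  also have "\<dots> = \<epsilon> * (M / (\<bar>a\<bar> + M))"
  proof -
    have "M * (\<epsilon> * t / (t + M)) / t = \<epsilon> * (M / (t + M))" if "0 < t" for t
    proof -
      have "M * (\<epsilon> * t / (t + M)) / t = (M * (\<epsilon> / (t + M))) * t / t" by simp
      also have "\<dots> = \<epsilon> * (M / (t + M))" using that by simp
      finally show ?thesis .
    qed
    then show ?thesis unfolding \<delta>_def using assms(2) by simp
  qed
  also have "\<dots> < \<epsilon>" using assms(2,3) M by (simp add: field_simps)
  finally show ?thesis .
qed

lemma pivot_tolerance:
  fixes a M \<epsilon> :: real
  assumes "a \<noteq> 0" "0 \<le> M" "0 < \<epsilon>"
  shows "0 < \<epsilon> * \<bar>a\<bar> / (\<bar>a\<bar> + M)" "\<epsilon> * \<bar>a\<bar> / (\<bar>a\<bar> + M) \<le> \<epsilon>"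
proof -
  have pos: "0 < \<bar>a\<bar> + M" using assms(1,2) by (simp add: add_pos_nonneg)
  then show "0 < \<epsilon> * \<bar>a\<bar> / (\<bar>a\<bar> + M)" using assms by simp
  have "\<bar>a\<bar> / (\<bar>a\<bar> + M) \<le> 1" using pos assms(2) by (subst divide_le_eq_1_pos) auto
  then have "\<epsilon> * (\<bar>a\<bar> / (\<bar>a\<bar> + M)) \<le> \<epsilon>" by (rule mult_left_le) (use assms(3) in linarith)
  then show "\<epsilon> * \<bar>a\<bar> / (\<bar>a\<bar> + M) \<le> \<epsilon>" by simp
qed

lemma solves_update_outside:
  assumes "i0 \<notin> I"
  shows "solves I J (y(i0 := r)) \<longleftrightarrow> solves I J y"
proof -
  have "(\<Sum>i\<in>I. f i * (y(i0 := r)) i) = (\<Sum>i\<in>I. f i * y i)" for f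
    using assms by (intro sum.cong) auto
  then show ?thesis unfolding solves_def by simp
qed

lemma solves_absent_variable:
  assumes "finite I" "i0 \<notin> I" "\<forall>j\<in>J. fst j i0 = 0"
  shows "solves (insert i0 I) J z \<longleftrightarrow> solves I J z"
  using assms unfolding solves_def by simp

lemma solves_pivot_extension:
  assumes I: "finite I" "i0 \<notin> I" and p: "p \<in> J" "fst p i0 \<noteq> 0"
    and y: "solves I (eliminate i0 p ` J) y"
  shows "solves (insert i0 I) J (y(i0 := (snd p - (\<Sum>i\<in>I. fst p i * y i)) / fst p i0))"
proof -
  define y' where "y' = y(i0 := (snd p - (\<Sum>i\<in>I. fst p i * y i)) / fst p i0)"
  have on_I: "(\<Sum>i\<in>I. f i * y' i) = (\<Sum>i\<in>I. f i * y i)" for f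
    unfolding y'_def using I(2) by (intro sum.cong) auto
  have py': "(\<Sum>i\<in>insert i0 I. fst p i * y' i) = snd p"
    using I p(2) unfolding on_I sum.insert[OF I] by (simp add: y'_def)
  have "(\<Sum>i\<in>insert i0 I. fst j i * y' i) = snd j" if j: "j \<in> J" for j
  proof -
    have "(\<Sum>i\<in>I. fst (eliminate i0 p j) i * y i) = snd (eliminate i0 p j)"
      using y j unfolding solves_def by blast
    then show ?thesis unfolding solves_eliminate_iff[OF I p(2) py'] on_I .
  qed
  then show ?thesis unfolding solves_def y'_def by blast
qed

text \<open>The rational points are dense in the solution set of a finite rational linear system:
  by Gaussian elimination, one variable at a time.\<close>
lemma rational_solution_nearby:
  assumes "finite I" "finite J" "rational_equations J" "solves I J x" "0 < \<epsilon>"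
  shows "\<exists>y. (\<forall>i. y i \<in> \<rat>) \<and> (\<forall>i\<in>I. \<bar>y i - x i\<bar> < \<epsilon>) \<and> solves I J y"
  using assms
proof (induction I arbitrary: J x \<epsilon> rule: finite_induct)
  case empty
  then show ?case by (intro exI[of _ "\<lambda>_. 0"]) (simp add: solves_def)
next
  case (insert i0 I)
  note finJ = insert.prems(1) and ratJ = insert.prems(2) and sol = insert.prems(3)
    and \<epsilon> = insert.prems(4)
  show ?case
  proof (cases "\<exists>p\<in>J. fst p i0 \<noteq> 0")
    case False
    then have absent: "solves (insert i0 I) J z \<longleftrightarrow> solves I J z" for z
      using solves_absent_variable[OF insert.hyps] by blast
    obtain y where y: "\<forall>i. y i \<in> \<rat>" "\<forall>i\<in>I. \<bar>y i - x i\<bar> < \<epsilon>" "solves I J y"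
      using insert.IH[OF finJ ratJ _ \<epsilon>] sol absent by blast
    obtain r where r: "r \<in> \<rat>" "\<bar>r - x i0\<bar> < \<epsilon>"
      using Rats_dense_in_real[of "x i0 - \<epsilon>" "x i0 + \<epsilon>"] \<epsilon> by (auto simp: abs_less_iff)
    have "solves (insert i0 I) J (y(i0 := r))"
      using y(3) absent solves_update_outside[OF insert.hyps(2)] by blast
    moreover have "\<forall>i\<in>insert i0 I. \<bar>(y(i0 := r)) i - x i\<bar> < \<epsilon>" using y(2) r by auto
    moreover have "\<forall>i. (y(i0 := r)) i \<in> \<rat>" using y(1) r(1) by simp
    ultimately show ?thesis by blast
  next
    case True
    then obtain p where p: "p \<in> J" "fst p i0 \<noteq> 0" by blast
    define \<delta> where "\<delta> = \<epsilon> * \<bar>fst p i0\<bar> / (\<bar>fst p i0\<bar> + (\<Sum>i\<in>I. \<bar>fst p i\<bar>))"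
    have \<delta>: "0 < \<delta>" "\<delta> \<le> \<epsilon>"
      using pivot_tolerance[OF p(2) _ \<epsilon>] unfolding \<delta>_def by (simp_all add: sum_nonneg)
    have px: "(\<Sum>i\<in>insert i0 I. fst p i * x i) = snd p" using sol p(1) unfolding solves_def by blast
    have "solves I (eliminate i0 p ` J) x"
      using sol solves_eliminate_iff[OF insert.hyps p(2) px] unfolding solves_def by blast
    then obtain y where y: "\<forall>i. y i \<in> \<rat>" "\<forall>i\<in>I. \<bar>y i - x i\<bar> < \<delta>"
        "solves I (eliminate i0 p ` J) y"
      using insert.IH[OF _ rational_equations_eliminate[OF ratJ p(1)] _ \<delta>(1)] finJ by blast
    define r where "r = (snd p - (\<Sum>i\<in>I. fst p i * y i)) / fst p i0"
    have "\<bar>r - x i0\<bar> < \<epsilon>"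
      unfolding r_def using pivot_solution_close[OF insert.hyps(1) p(2) \<epsilon>, of "x i0"] px y(2)
      by (simp add: insert.hyps \<delta>_def)
    then have "\<forall>i\<in>insert i0 I. \<bar>(y(i0 := r)) i - x i\<bar> < \<epsilon>" using y(2) \<delta>(2) by force
    moreover have "solves (insert i0 I) J (y(i0 := r))"
      unfolding r_def by (rule solves_pivot_extension[OF insert.hyps p y(3)])
    moreover have "\<forall>i. (y(i0 := r)) i \<in> \<rat>"
      using y(1) p(1) ratJ unfolding r_def rational_equations_def
      by (auto intro!: Rats_divide Rats_diff Rats_sum Rats_mult)
    ultimately show ?thesis by blast
  qed
qed

definition unit_equation :: "'i \<Rightarrow> 'i equation" where
  "unit_equation i0 = ((\<lambda>i. if i = i0 then 1 else 0), 0)"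

lemma solves_unit_equations:
  assumes "finite I" "Z \<subseteq> I"
  shows "solves I (unit_equation ` Z) z \<longleftrightarrow> (\<forall>i\<in>Z. z i = 0)"
proof -
  have "\<forall>i0\<in>Z. (\<Sum>i\<in>I. (if i = i0 then 1 else 0) * z i) = z i0"
    using assms by (auto simp: if_distrib[of "\<lambda>t. t * _"] sum.delta' cong: if_cong)
  then show ?thesis unfolding solves_def unit_equation_def by auto
qed

lemma rational_nonneg_solution:
  assumes I: "finite I" and J: "finite J" "rational_equations J"
    and x: "solves I J x" "\<forall>i\<in>I. 0 \<le> x i"
  shows "\<exists>y. (\<forall>i. y i \<in> \<rat>) \<and> solves I J y \<and> (\<forall>i\<in>I. 0 \<le> y i \<and> (x i = 0 \<longrightarrow> y i = 0))"
proof -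
  define Z where "Z = {i\<in>I. x i = 0}"
  define J' where "J' = J \<union> unit_equation ` Z"
  have Z: "finite Z" "Z \<subseteq> I" using I unfolding Z_def by auto
  have sol': "solves I J' z \<longleftrightarrow> solves I J z \<and> (\<forall>i\<in>Z. z i = 0)" for z
    unfolding J'_def solves_Un solves_unit_equations[OF I Z(2)] ..
  define \<epsilon> where "\<epsilon> = Min (insert 1 (x ` {i\<in>I. 0 < x i}))"
  have fin\<epsilon>: "finite (insert 1 (x ` {i\<in>I. 0 < x i}))" using I by simp
  then have \<epsilon>: "0 < \<epsilon>" "\<forall>i\<in>I. 0 < x i \<longrightarrow> \<epsilon> \<le> x i"
    unfolding \<epsilon>_def by (auto simp: Min_gr_iff)
  have "finite J'" "rational_equations J'"
    using J Z unfolding J'_def rational_equations_def unit_equation_def by auto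
  moreover have "solves I J' x" using sol' x(1) unfolding Z_def by simp
  ultimately obtain y where y: "\<forall>i. y i \<in> \<rat>" "\<forall>i\<in>I. \<bar>y i - x i\<bar> < \<epsilon>" "solves I J' y"
    using rational_solution_nearby[OF I _ _ _ \<epsilon>(1)] by blast
  have "0 \<le> y i \<and> (x i = 0 \<longrightarrow> y i = 0)" if i: "i \<in> I" for i
  proof (cases "x i = 0")
    case True
    then have "i \<in> Z" unfolding Z_def using i by simp
    then show ?thesis using y(3) True unfolding sol' by simp
  next
    case False
    then have "0 < x i" using x(2) i by (simp add: less_le)
    then have "\<epsilon> \<le> x i" using \<epsilon>(2) i by blast
    moreover have "\<bar>y i - x i\<bar> < \<epsilon>" using y(2) i by blast
    ultimately show ?thesis using False by linarith
  qed
  moreover have "solves I J y" using y(3) unfolding sol' by blast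
  ultimately show ?thesis using y(1) by (intro exI[of _ y]) simp
qed

lemma common_denominator:
  "finite S \<Longrightarrow> \<forall>q\<in>S. q \<in> \<rat> \<Longrightarrow> \<exists>k::nat. k \<ge> 1 \<and> (\<forall>q\<in>S. \<exists>n::int. real k * q = of_int n)"
proof (induction S rule: finite_induct)
  case empty
  then show ?case by (intro exI[of _ 1]) auto
next
  case (insert q S)
  obtain k where k: "k \<ge> 1" "\<forall>p\<in>S. \<exists>n::int. real k * p = of_int n" using insert by auto
  have "q \<in> \<rat>" using insert.prems by simp
  then obtain a b where ab: "q = of_int a / of_int b" "b > 0" by (rule Rats_cases') auto
  define k' where "k' = k * nat b"
  have "k' \<ge> 1" unfolding k'_def using k(1) ab(2) by simp
  moreover have "\<forall>p\<in>insert q S. \<exists>n::int. real k' * p = of_int n"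
  proof
    fix p assume "p \<in> insert q S"
    then show "\<exists>n::int. real k' * p = of_int n"
    proof
      assume "p = q"
      have "real k' * p = of_int (int k * a)" unfolding k'_def \<open>p = q\<close> ab(1) using ab(2) by simp
      thus ?thesis by blast
    next
      assume "p \<in> S"
      then obtain n where "real k * p = of_int n" using k(2) by blast
      hence "real k' * p = of_int (n * b)" unfolding k'_def using ab(2) by (simp add: mult.commute mult.left_commute)
      thus ?thesis by blast
    qed
  qed
  ultimately show ?case by blast
qed

lemma scale_to_naturals:
  assumes "finite I" "\<forall>i\<in>I. y i \<in> \<rat> \<and> 0 \<le> y i"
  obtains k :: nat and w :: "'i \<Rightarrow> nat" where "1 \<le> k" "\<forall>i\<in>I. real (w i) = real k * y i"
proof -
  have "finite (y ` I)" "\<forall>q\<in>y ` I. q \<in> \<rat>" using assms by auto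
  then obtain k :: nat where k: "1 \<le> k" "\<forall>q\<in>y ` I. \<exists>n::int. real k * q = of_int n"
    using common_denominator by blast
  have "real (nat \<lfloor>real k * y i\<rfloor>) = real k * y i" if i: "i \<in> I" for i
  proof -
    obtain n :: int where n: "real k * y i = of_int n" using bspec[OF k(2) imageI[OF i]] by blast
    moreover have "0 \<le> real k * y i" using assms(2) i by simp
    then have "0 \<le> n" using n by simp
    ultimately show ?thesis by simp
  qed
  then show ?thesis using k(1) by (intro that[of k "\<lambda>i. nat \<lfloor>real k * y i\<rfloor>"]) auto
qed

lemma finite_pairsK: "finite V \<Longrightarrow> finite (pairsK V)"
  by (rule finite_subset[of _ "Pow V"]) (auto simp: pairsK_def)

lemma pairsK_at_vertex:
  assumes "a \<in> V"
  shows "{e \<in> pairsK V. a \<in> e} = (\<lambda>b. {a, b}) ` (V - {a})"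
  using assms unfolding pairsK_def by auto

definition edge_equation :: "'a set \<Rightarrow> ('a set \<times> nat) equation" where
  "edge_equation e = ((\<lambda>i. of_bool (fst i = e)), 1)"

definition vertex_equation :: "nat \<Rightarrow> 'a \<Rightarrow> ('a set \<times> nat) equation" where
  "vertex_equation d a = ((\<lambda>i. of_bool (snd i = d \<and> a \<in> fst i)), 1)"

lemma edge_equation_sum:
  assumes "finite V" "e \<in> pairsK V"
  shows "(\<Sum>i\<in>pairsK V \<times> {1..r}. fst (edge_equation e) i * Z i) = (\<Sum>d=1..r. Z (e, d))"
proof -
  have "(pairsK V \<times> {1..r}) \<inter> {i. fst i = e} = Pair e ` {1..r}" using assms(2) by auto
  then show ?thesis unfolding edge_equation_def
    by (simp add: finite_pairsK[OF assms(1)] sum.reindex inj_on_def)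
qed

lemma vertex_equation_sum:
  assumes "finite V" "a \<in> V" "d \<in> {1..r}"
  shows "(\<Sum>i\<in>pairsK V \<times> {1..r}. fst (vertex_equation d a) i * Z i) = (\<Sum>b\<in>V - {a}. Z ({a, b}, d))"
proof -
  have "(pairsK V \<times> {1..r}) \<inter> {i. snd i = d \<and> a \<in> fst i} = (\<lambda>e. (e, d)) ` {e \<in> pairsK V. a \<in> e}"
    using assms(3) by auto
  also have "\<dots> = (\<lambda>b. ({a, b}, d)) ` (V - {a})"
    unfolding pairsK_at_vertex[OF assms(2)] image_image ..
  finally have pairs_at_a: "(pairsK V \<times> {1..r}) \<inter> {i. snd i = d \<and> a \<in> fst i} = (\<lambda>b. ({a, b}, d)) ` (V - {a})" .
  have "(\<Sum>i\<in>pairsK V \<times> {1..r}. fst (vertex_equation d a) i * Z i) =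
      (\<Sum>i\<in>(pairsK V \<times> {1..r}) \<inter> {i. snd i = d \<and> a \<in> fst i}. Z i)"
    unfolding vertex_equation_def fst_conv
    by (rule sum_of_bool_mult_eq) (simp add: finite_pairsK[OF assms(1)])
  also have "\<dots> = (\<Sum>b\<in>V - {a}. Z ({a, b}, d))"
    unfolding pairs_at_a by (rule sum.reindex_cong[where l = "\<lambda>b. ({a, b}, d)"])
      (auto simp: inj_on_def doubleton_eq_iff)
  finally show ?thesis .
qed

definition P_equations :: "'a set \<Rightarrow> 'a set set \<Rightarrow> nat \<Rightarrow> ('a set \<times> nat) equation set" where
  "P_equations V E r = edge_equation ` E \<union> (\<lambda>(d, a). vertex_equation d a) ` ({1..r} \<times> V)"

lemma solves_P_equations:
  assumes finV: "finite V" and EK: "E \<subseteq> pairsK V"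
  shows "solves (pairsK V \<times> {1..r}) (P_equations V E r) Z \<longleftrightarrow>
    (\<forall>e\<in>E. (\<Sum>d=1..r. Z (e, d)) = 1) \<and> (\<forall>d\<in>{1..r}. \<forall>a\<in>V. (\<Sum>b\<in>V - {a}. Z ({a, b}, d)) = 1)"
proof -
  have "solves (pairsK V \<times> {1..r}) (edge_equation ` E) Z \<longleftrightarrow> (\<forall>e\<in>E. (\<Sum>d=1..r. Z (e, d)) = 1)"
    unfolding solves_def ball_simps(9)
  proof (rule ball_cong[OF refl])
    fix e assume "e \<in> E"
    then show "(\<Sum>i\<in>pairsK V \<times> {1..r}. fst (edge_equation e) i * Z i) = snd (edge_equation e) \<longleftrightarrow>
        (\<Sum>d=1..r. Z (e, d)) = 1"
      using edge_equation_sum[OF finV] EK by (auto simp: edge_equation_def)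
  qed
  moreover have "solves (pairsK V \<times> {1..r}) ((\<lambda>(d, a). vertex_equation d a) ` ({1..r} \<times> V)) Z \<longleftrightarrow>
      (\<forall>d\<in>{1..r}. \<forall>a\<in>V. (\<Sum>b\<in>V - {a}. Z ({a, b}, d)) = 1)"
    unfolding solves_def using vertex_equation_sum[OF finV] by (auto simp: vertex_equation_def)
  ultimately show ?thesis unfolding P_equations_def solves_Un by blast
qed

lemma rational_P_equations: "rational_equations (P_equations V E r)"
  unfolding P_equations_def rational_equations_def edge_equation_def vertex_equation_def by auto

lemma P_GHA_rational_point:
  assumes finV: "finite V" and EK: "E \<subseteq> pairsK V" and xP: "x \<in> P_GHA V E r H A"
  obtains y where "y \<in> P_GHA V E r H A" "\<forall>e d. y e d \<in> \<rat> \<and> 0 \<le> y e d"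
    "\<forall>e d. (e, d) \<notin> pairsK V \<times> {1..r} \<longrightarrow> y e d = 0"
proof -
  define I where "I = pairsK V \<times> {1..r}"
  note P = xP[unfolded P_GHA_def mem_Collect_eq]
  have finI: "finite I" unfolding I_def using finite_pairsK[OF finV] by simp
  have finJ: "finite (P_equations V E r)"
    using EK finite_pairsK[OF finV] finV unfolding P_equations_def by (auto intro: finite_subset)
  have sol: "solves I (P_equations V E r) (\<lambda>i. x (fst i) (snd i))"
    unfolding I_def solves_P_equations[OF finV EK] using P by simp
  have nonneg: "\<forall>i\<in>I. 0 \<le> x (fst i) (snd i)"
  proof
    fix i assume "i \<in> I"
    then show "0 \<le> x (fst i) (snd i)" using P unfolding I_def by (cases "fst i \<in> E") auto
  qed
  obtain Y where Y: "\<forall>i. Y i \<in> \<rat>" "solves I (P_equations V E r) Y"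
      "\<forall>i\<in>I. 0 \<le> Y i \<and> (x (fst i) (snd i) = 0 \<longrightarrow> Y i = 0)"
    using rational_nonneg_solution[OF finI finJ rational_P_equations sol nonneg] by blast
  define y where "y = (\<lambda>e d. if (e, d) \<in> I then Y (e, d) else 0)"
  have sums: "(\<forall>e\<in>E. (\<Sum>d=1..r. Y (e, d)) = 1) \<and>
      (\<forall>d\<in>{1..r}. \<forall>a\<in>V. (\<Sum>b\<in>V - {a}. Y ({a, b}, d)) = 1)"
    using Y(2) unfolding I_def solves_P_equations[OF finV EK] .
  have y_on_edge: "(\<Sum>d=1..r. y e d) = (\<Sum>d=1..r. Y (e, d))" if "e \<in> pairsK V" for e
    using that unfolding y_def I_def by (intro sum.cong) auto
  have y_at_vertex: "(\<Sum>b\<in>V - {a}. y {a, b} d) = (\<Sum>b\<in>V - {a}. Y ({a, b}, d))"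
    if "a \<in> V" "d \<in> {1..r}" for a d
    using that unfolding y_def I_def pairsK_def by (intro sum.cong) auto
  have y_zero: "y e d = 0" if "x e d = 0" for e d
    using Y(3) that unfolding y_def by auto
  have y_nonneg: "0 \<le> y e d" for e d using Y(3) unfolding y_def by auto
  have y_sum: "\<forall>e\<in>E. (\<Sum>d=1..r. y e d) = 1" using sums y_on_edge EK by auto
  have "y \<in> P_GHA V E r H A"
    unfolding P_GHA_def mem_Collect_eq
  proof (intro conjI)
    show "\<forall>e\<in>E. \<forall>d\<in>{1..r}. 0 \<le> y e d \<and> y e d \<le> 1"
      using y_sum y_nonneg by (metis member_le_sum finite_atLeastAtMost)
  qed (use y_sum sums y_at_vertex P y_zero in auto)
  moreover have "\<forall>e d. y e d \<in> \<rat> \<and> 0 \<le> y e d" using Y(1) y_nonneg unfolding y_def by simp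
  moreover have "\<forall>e d. (e, d) \<notin> pairsK V \<times> {1..r} \<longrightarrow> y e d = 0" unfolding y_def I_def by simp
  ultimately show ?thesis using that by blast
qed

lemma chiEc_Inl [simp]: "chiEc V q c (Inl e) = of_bool (e \<in> pairsK V \<and> e \<in> q)"
  unfolding chiEc_def by simp

lemma chiEc_Inr [simp]: "chiEc V q c (Inr c') = of_bool (c' \<in> eq_parts V \<and> c' = c)"
  unfolding chiEc_def by auto

lemma PM_vertex_sum:
  assumes "m \<in> PM V" "a \<in> V" "finite V"
  shows "(\<Sum>b\<in>V - {a}. m (Inl {a, b})) = 1"
proof -
  obtain q c where m: "m = chiEc V q c" "c \<in> eq_parts V" "perfect_matching_of V c q"
    using assms(1) unfolding PM_def by blast
  have "(\<Sum>b\<in>V - {a}. m (Inl {a, b})) = (\<Sum>b\<in>V - {a}. if {a, b} \<in> q then 1 else 0)"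
    using m(1) assms(2) by (intro sum.cong) (auto simp: pairsK_def)
  also have "\<dots> = 1" by (rule perfect_matching_degree[OF m(3,2) assms(2,3)])
  finally show ?thesis .
qed

lemma PM_same_side:
  assumes "m \<in> PM V" "m (Inr {X, Y}) \<noteq> 0" "X \<inter> Y = {}"
    and "(a \<in> X \<and> b \<in> X) \<or> (a \<in> Y \<and> b \<in> Y)"
  shows "m (Inl {a, b}) = 0"
proof (rule ccontr)
  assume "m (Inl {a, b}) \<noteq> 0"
  obtain q c where m: "m = chiEc V q c" "perfect_matching_of V c q"
    using assms(1) unfolding PM_def by blast
  with assms(2) \<open>m (Inl {a, b}) \<noteq> 0\<close> have "c = {X, Y}" "{a, b} \<in> bip_edges {X, Y}"
    unfolding perfect_matching_of_def by auto
  then obtain a' b' X' Y' where e: "{a, b} = {a', b'}" "{X, Y} = {X', Y'}" "X' \<inter> Y' = {}"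
      "a' \<in> X'" "b' \<in> Y'"
    unfolding bip_edges_def mem_Collect_eq by metis
  have "(X' = X \<and> Y' = Y) \<or> (X' = Y \<and> Y' = X)" using e(2) by (auto simp: doubleton_eq_iff)
  moreover have "a' \<in> {a, b}" "b' \<in> {a, b}" using e(1) by auto
  ultimately show False using assms(3,4) e(3-5) by blast
qed

lemma Ncomb_sum:
  assumes "finite P" "g ` P \<subseteq> M"
  shows "(\<lambda>i. \<Sum>p\<in>P. g p i) \<in> Ncomb M"
proof -
  have "(\<Sum>p\<in>P. g p i) = (\<Sum>m\<in>g ` P. card {p\<in>P. g p = m} * m i)" for i
  proof -
    have "(\<Sum>p\<in>P. g p i) = (\<Sum>m\<in>g ` P. \<Sum>p\<in>{p\<in>P. g p = m}. g p i)"
      by (rule sum.image_gen[OF assms(1)])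
    also have "\<dots> = (\<Sum>m\<in>g ` P. card {p\<in>P. g p = m} * m i)" by simp
    finally show ?thesis .
  qed
  then show ?thesis using assms unfolding Ncomb_def
    by (intro CollectI exI[of _ "g ` P"] exI[of _ "\<lambda>m. card {p\<in>P. g p = m}"]) auto
qed

definition target_vector :: "'a set \<Rightarrow> 'a set set \<Rightarrow> nat \<Rightarrow> (nat \<Rightarrow> 'a set) \<Rightarrow> (nat \<Rightarrow> 'a set) \<Rightarrow> 'a vec"
  where "target_vector V E r H A = case_sum (\<lambda>e. of_bool (e \<in> pairsK V \<and> e \<in> E))
     (\<lambda>c. if c \<in> eq_parts V then card {d \<in> {1..r}. {H d, A d} = c} else 0)"

text \<open>Since elements of Nbar vanish outside K and C, the vector in the theorem is unique.\<close>
lemma Nbar_target_iff: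
  "(\<exists>v \<in> Nbar V M. (\<forall>e \<in> pairsK V. v (Inl e) = (if e \<in> E then 1 else 0)) \<and>
     (\<forall>c \<in> eq_parts V. v (Inr c) = card {d \<in> {1..r}. {H d, A d} = c}))
   \<longleftrightarrow> target_vector V E r H A \<in> Nbar V M"
proof
  assume "\<exists>v \<in> Nbar V M. (\<forall>e \<in> pairsK V. v (Inl e) = (if e \<in> E then 1 else 0)) \<and>
     (\<forall>c \<in> eq_parts V. v (Inr c) = card {d \<in> {1..r}. {H d, A d} = c})"
  then obtain v where v: "v \<in> Nbar V M" "\<forall>e \<in> pairsK V. v (Inl e) = (if e \<in> E then 1 else 0)"
    "\<forall>c \<in> eq_parts V. v (Inr c) = card {d \<in> {1..r}. {H d, A d} = c}" by blast
  have vec: "is_vec V v" using v(1) unfolding Nbar_def by blast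
  have "v i = target_vector V E r H A i" for i
  proof (cases i)
    case (Inl e)
    then show ?thesis
      using v(2) vec unfolding target_vector_def is_vec_def coordsKC_def by (cases "e \<in> pairsK V") auto
  next
    case (Inr c)
    then show ?thesis
      using v(3) vec unfolding target_vector_def is_vec_def coordsKC_def by (cases "c \<in> eq_parts V") auto
  qed
  then show "target_vector V E r H A \<in> Nbar V M" using v(1) by (metis ext)
next
  assume "target_vector V E r H A \<in> Nbar V M"
  then show "\<exists>v \<in> Nbar V M. (\<forall>e \<in> pairsK V. v (Inl e) = (if e \<in> E then 1 else 0)) \<and>
     (\<forall>c \<in> eq_parts V. v (Inr c) = card {d \<in> {1..r}. {H d, A d} = c})"
    by (intro bexI[of _ "target_vector V E r H A"]) (auto simp: target_vector_def)
qed

text \<open>Colour class d of an integral scaling w = k y of a point y of P(G,HA) is a k-regular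
  bipartite multigraph on H(d), A(d), hence a sum of k perfect matchings of B_{H(d),A(d)}.\<close>
lemma colour_class_matchings:
  assumes finV: "finite V" and hap: "HAP_table V r H A" and yP: "y \<in> P_GHA V E r H A"
    and d: "d \<in> {1..r}" and yout: "\<forall>e. e \<notin> pairsK V \<longrightarrow> y e d = 0"
    and w: "\<forall>e. real (w e) = real k * y e d"
  shows "\<exists>qs. (\<forall>j<k. perfect_matching_of V {H d, A d} (qs j)) \<and>
    (\<forall>a\<in>V. \<forall>b\<in>V. a \<noteq> b \<longrightarrow> w {a, b} = card {j. j < k \<and> {a, b} \<in> qs j})"
proof -
  note P = yP[unfolded P_GHA_def mem_Collect_eq]
  have HA: "H d \<inter> A d = {}" "H d \<union> A d = V" "{H d, A d} \<in> eq_parts V"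
    using hap d unfolding HAP_table_def by auto
  have deg: "\<forall>a\<in>V. (\<Sum>b\<in>V - {a}. w {a, b}) = k"
  proof
    fix a assume a: "a \<in> V"
    have "real (\<Sum>b\<in>V - {a}. w {a, b}) = real k * (\<Sum>b\<in>V - {a}. y {a, b} d)"
      by (simp add: w sum_distrib_left)
    also have "\<dots> = real k" using P a d by simp
    finally show "(\<Sum>b\<in>V - {a}. w {a, b}) = k" by (simp only: of_nat_eq_iff)
  qed
  have bip: "\<forall>a\<in>V. \<forall>b\<in>V. 0 < w {a, b} \<longrightarrow> (a \<in> H d \<and> b \<in> A d) \<or> (a \<in> A d \<and> b \<in> H d)"
  proof (intro ballI impI)
    fix a b assume a: "a \<in> V" and b: "b \<in> V" and pos: "0 < w {a, b}"
    have "y {a, b} d \<noteq> 0"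
    proof
      assume "y {a, b} d = 0"
      then have "real (w {a, b}) = 0" using w by simp
      with pos show False by simp
    qed
    then have "{a, b} \<in> pairsK V" using yout by blast
    with \<open>y {a, b} d \<noteq> 0\<close> have "{a, b} \<in> E" using P d by blast
    with \<open>y {a, b} d \<noteq> 0\<close> have "\<not> ((a \<in> H d \<and> b \<in> H d) \<or> (a \<in> A d \<and> b \<in> A d))"
      using P d by blast
    then show "(a \<in> H d \<and> b \<in> A d) \<or> (a \<in> A d \<and> b \<in> H d)" using a b HA(2) by blast
  qed
  show ?thesis
    using regular_bipartite_decomposition[OF finV HA(1,2) eq_parts_card_eq[OF HA(3)] deg bip] .
qed

lemma sum_of_colour_matchings:
  assumes yP: "y \<in> P_GHA V E r H A" and w: "\<forall>e d. real (w e d) = real k * y e d"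
    and Q: "\<forall>d\<in>{1..r}. \<forall>a\<in>V. \<forall>b\<in>V. a \<noteq> b \<longrightarrow> w {a, b} d = card {j. j < k \<and> {a, b} \<in> Q d j}"
  shows "(\<Sum>d\<in>{1..r}. \<Sum>j<k. chiEc V (Q d j) {H d, A d} i) = k * target_vector V E r H A i"
proof -
  note P = yP[unfolded P_GHA_def mem_Collect_eq]
  define D where "D = {1..r}"
  define T where "T = (\<Sum>d\<in>D. \<Sum>j<k. chiEc V (Q d j) {H d, A d} i)"
  have "T = k * target_vector V E r H A i"
  proof (cases i)
    case (Inl e)
    show ?thesis
    proof (cases "e \<in> pairsK V")
      case True
      then obtain a b where ab: "a \<in> V" "b \<in> V" "a \<noteq> b" "e = {a, b}" unfolding pairsK_def by blast
      have "T = (\<Sum>d\<in>D. card {j. j < k \<and> e \<in> Q d j})"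
        unfolding T_def Inl using True by (simp add: Int_def conj_commute)
      also have "\<dots> = (\<Sum>d\<in>D. w e d)" using Q ab unfolding D_def by (intro sum.cong) auto
      finally have "real T = real k * (\<Sum>d\<in>D. y e d)" by (simp add: w sum_distrib_left)
      also have "(\<Sum>d\<in>D. y e d) = of_bool (e \<in> E)"
        using P True unfolding D_def by (cases "e \<in> E") auto
      also have "real k * of_bool (e \<in> E) = real (k * of_bool (e \<in> E))" by simp
      finally have "T = k * of_bool (e \<in> E)" by (simp only: of_nat_eq_iff)
      then show ?thesis using True unfolding Inl target_vector_def by simp
    next
      case False
      then show ?thesis unfolding T_def Inl target_vector_def by simp
    qed
  next
    case (Inr c)
    have "T = (\<Sum>d\<in>D. k * of_bool (c \<in> eq_parts V \<and> {H d, A d} = c))"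
      unfolding T_def Inr by (intro sum.cong) auto
    also have "\<dots> = k * (\<Sum>d\<in>D. of_bool (c \<in> eq_parts V \<and> {H d, A d} = c))"
      by (rule sum_distrib_left[symmetric])
    also have "(\<Sum>d\<in>D. of_bool (c \<in> eq_parts V \<and> {H d, A d} = c)) =
        (if c \<in> eq_parts V then card {d \<in> D. {H d, A d} = c} else 0)"
      unfolding D_def by (simp add: Int_def)
    finally show ?thesis unfolding Inr target_vector_def D_def by simp
  qed
  then show ?thesis unfolding T_def D_def .
qed

lemma scaled_target_in_Ncomb:
  assumes finV: "finite V" and hap: "HAP_table V r H A" and yP: "y \<in> P_GHA V E r H A"
    and yout: "\<forall>e d. (e, d) \<notin> pairsK V \<times> {1..r} \<longrightarrow> y e d = 0"
    and w: "\<forall>e d. real (w e d) = real k * y e d"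
  shows "(\<lambda>i. k * target_vector V E r H A i) \<in> Ncomb (PM V)"
proof -
  have "\<forall>d\<in>{1..r}. \<exists>qs. (\<forall>j<k. perfect_matching_of V {H d, A d} (qs j)) \<and>
      (\<forall>a\<in>V. \<forall>b\<in>V. a \<noteq> b \<longrightarrow> w {a, b} d = card {j. j < k \<and> {a, b} \<in> qs j})"
  proof
    fix d assume "d \<in> {1..r}"
    moreover from this have "\<forall>e. e \<notin> pairsK V \<longrightarrow> y e d = 0" using yout by blast
    ultimately show "\<exists>qs. (\<forall>j<k. perfect_matching_of V {H d, A d} (qs j)) \<and>
        (\<forall>a\<in>V. \<forall>b\<in>V. a \<noteq> b \<longrightarrow> w {a, b} d = card {j. j < k \<and> {a, b} \<in> qs j})"
      using colour_class_matchings[OF finV hap yP, of d "\<lambda>e. w e d" k] w by blast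
  qed
  then obtain Q where Q: "\<forall>d\<in>{1..r}. (\<forall>j<k. perfect_matching_of V {H d, A d} (Q d j)) \<and>
      (\<forall>a\<in>V. \<forall>b\<in>V. a \<noteq> b \<longrightarrow> w {a, b} d = card {j. j < k \<and> {a, b} \<in> Q d j})"
    by metis
  define T where "T = (\<lambda>i. \<Sum>p\<in>{1..r} \<times> {..<k}. chiEc V (Q (fst p) (snd p)) {H (fst p), A (fst p)} i)"
  have "T \<in> Ncomb (PM V)" unfolding T_def
  proof (rule Ncomb_sum)
    show "(\<lambda>p. chiEc V (Q (fst p) (snd p)) {H (fst p), A (fst p)}) ` ({1..r} \<times> {..<k}) \<subseteq> PM V"
      using Q hap unfolding PM_def HAP_table_def by fastforce
  qed simp
  moreover have "T i = k * target_vector V E r H A i" for i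
  proof -
    have "T i = (\<Sum>d\<in>{1..r}. \<Sum>j<k. chiEc V (Q d j) {H d, A d} i)"
      unfolding T_def by (simp add: sum.cartesian_product split_beta)
    also have "\<dots> = k * target_vector V E r H A i"
      by (rule sum_of_colour_matchings[OF yP w]) (use Q in blast)
    finally show ?thesis .
  qed
  ultimately show ?thesis by (metis ext)
qed

lemma sum_inverse_class_size:
  assumes "finite D"
  shows "(\<Sum>d\<in>D. of_bool (g d = c) / real (card {d' \<in> D. g d' = g d})) = of_bool (\<exists>d\<in>D. g d = c)"
proof -
  define Dc where "Dc = {d \<in> D. g d = c}"
  have "(\<Sum>d\<in>D. of_bool (g d = c) / real (card {d' \<in> D. g d' = g d})) =
      (\<Sum>d\<in>D. if g d = c then 1 / real (card Dc) else 0)"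
    unfolding Dc_def by (intro sum.cong) auto
  also have "\<dots> = real (card Dc) * (1 / real (card Dc))"
    using assms by (simp add: sum.If_cases Dc_def Int_def)
  also have "\<dots> = of_bool (\<exists>d\<in>D. g d = c)"
    using assms unfolding Dc_def by (auto simp: card_gt_0_iff)
  finally show ?thesis .
qed

text \<open>Spreading each matching m of class c with weight f(m)/k evenly over the colours d with
  {H(d),A(d)} = c yields a point of P(G,HA).\<close>
context
  fixes V :: "'a set" and E :: "'a set set" and r :: nat and H A :: "nat \<Rightarrow> 'a set"
    and k :: nat and S :: "'a vec set" and f :: "'a vec \<Rightarrow> nat"
  assumes finV: "finite V" and EK: "E \<subseteq> pairsK V" and hap: "HAP_table V r H A"
    and k: "1 \<le> k" and S: "finite S" "S \<subseteq> PM V"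
    and kv: "\<And>i. k * target_vector V E r H A i = (\<Sum>m\<in>S. f m * m i)"
begin

definition class_size :: "nat \<Rightarrow> nat" where
  "class_size d = card {d' \<in> {1..r}. {H d', A d'} = {H d, A d}}"

definition spread :: "'a set \<Rightarrow> nat \<Rightarrow> real" where
  "spread e d = real (\<Sum>m\<in>S. f m * m (Inr {H d, A d}) * m (Inl e)) / (real k * real (class_size d))"

lemma class_in_eq_parts: "d \<in> {1..r} \<Longrightarrow> {H d, A d} \<in> eq_parts V"
  using hap unfolding HAP_table_def by blast

lemma class_size_pos: "d \<in> {1..r} \<Longrightarrow> 0 < class_size d"
  unfolding class_size_def by (auto simp: card_gt_0_iff)

lemma target_at_class: "d \<in> {1..r} \<Longrightarrow> target_vector V E r H A (Inr {H d, A d}) = class_size d"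
  using class_in_eq_parts unfolding target_vector_def class_size_def by simp

text \<open>Every matching used with positive weight belongs to a class occurring in the table, so
  its weights 1/class_size over the colours of that class add up to one.\<close>
lemma used_matching_class_weight:
  assumes m: "m \<in> S" "f m \<noteq> 0"
  shows "(\<Sum>d\<in>{1..r}. real (m (Inr {H d, A d})) / real (class_size d)) = 1"
proof -
  obtain q c where mqc: "m = chiEc V q c" "c \<in> eq_parts V" using m S unfolding PM_def by blast
  have "\<exists>d\<in>{1..r}. {H d, A d} = c"
  proof (rule ccontr)
    assume "\<not> (\<exists>d\<in>{1..r}. {H d, A d} = c)"
    then have "target_vector V E r H A (Inr c) = 0" using mqc(2) unfolding target_vector_def by auto
    then have "f m * m (Inr c) = 0" using kv[of "Inr c"] S(1) m(1) by simp
    then show False using m(2) mqc by simp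
  qed
  moreover have "m (Inr {H d, A d}) = of_bool ({H d, A d} = c)" if "d \<in> {1..r}" for d
    using mqc class_in_eq_parts[OF that] by simp
  ultimately show ?thesis
    using sum_inverse_class_size[of "{1..r}" "\<lambda>d. {H d, A d}" c] unfolding class_size_def by simp
qed

lemma spread_edge_sum: "(\<Sum>d\<in>{1..r}. spread e d) = real (target_vector V E r H A (Inl e))"
proof -
  have per_matching: "(\<Sum>d\<in>{1..r}. real (f m * m (Inr {H d, A d}) * m (Inl e)) / (real k * real (class_size d))) =
      real (f m * m (Inl e)) / real k" if "m \<in> S" for m
  proof (cases "f m = 0")
    case False
    have "(\<Sum>d\<in>{1..r}. real (f m * m (Inr {H d, A d}) * m (Inl e)) / (real k * real (class_size d))) =
        real (f m * m (Inl e)) / real k * (\<Sum>d\<in>{1..r}. real (m (Inr {H d, A d})) / real (class_size d))"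
      by (simp add: sum_distrib_left mult_ac)
    then show ?thesis using used_matching_class_weight[OF that False] by simp
  qed simp
  have "(\<Sum>d\<in>{1..r}. spread e d) =
      (\<Sum>m\<in>S. \<Sum>d\<in>{1..r}. real (f m * m (Inr {H d, A d}) * m (Inl e)) / (real k * real (class_size d)))"
    unfolding spread_def of_nat_sum sum_divide_distrib by (rule sum.swap)
  also have "\<dots> = real (\<Sum>m\<in>S. f m * m (Inl e)) / real k"
    using per_matching by (simp add: sum_divide_distrib)
  also have "\<dots> = real (k * target_vector V E r H A (Inl e)) / real k" by (simp only: kv)
  also have "\<dots> = real (target_vector V E r H A (Inl e))" using k by simp
  finally show ?thesis .
qed

lemma spread_vertex_sum:
  assumes a: "a \<in> V" and d: "d \<in> {1..r}"
  shows "(\<Sum>b\<in>V - {a}. spread {a, b} d) = 1"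
proof -
  have "(\<Sum>b\<in>V - {a}. \<Sum>m\<in>S. f m * m (Inr {H d, A d}) * m (Inl {a, b})) =
      (\<Sum>m\<in>S. f m * m (Inr {H d, A d}) * (\<Sum>b\<in>V - {a}. m (Inl {a, b})))"
    by (simp add: sum.swap[of _ "V - {a}"] sum_distrib_left)
  also have "\<dots> = k * class_size d"
    using PM_vertex_sum[OF _ a finV] S kv[of "Inr {H d, A d}"] target_at_class[OF d]
    by (simp add: subset_iff)
  finally have N: "(\<Sum>b\<in>V - {a}. \<Sum>m\<in>S. f m * m (Inr {H d, A d}) * m (Inl {a, b})) = k * class_size d" .
  have "(\<Sum>b\<in>V - {a}. spread {a, b} d) =
      real (\<Sum>b\<in>V - {a}. \<Sum>m\<in>S. f m * m (Inr {H d, A d}) * m (Inl {a, b})) / (real k * real (class_size d))"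
    unfolding spread_def by (simp only: sum_divide_distrib[symmetric] of_nat_sum[symmetric])
  also have "\<dots> = 1" unfolding N using class_size_pos[OF d] k by simp
  finally show ?thesis .
qed

lemma spread_nonedge:
  assumes "e \<in> pairsK V - E"
  shows "spread e d = 0"
proof -
  have "(\<Sum>m\<in>S. f m * m (Inl e)) = 0"
    using kv[of "Inl e"] assms unfolding target_vector_def by simp
  then have "\<forall>m\<in>S. f m * m (Inl e) = 0" using S(1) by simp
  then have "(\<Sum>m\<in>S. f m * m (Inr {H d, A d}) * m (Inl e)) = 0" by (intro sum.neutral) auto
  then show ?thesis unfolding spread_def by simp
qed

lemma spread_same_side:
  assumes d: "d \<in> {1..r}" and side: "(a \<in> H d \<and> b \<in> H d) \<or> (a \<in> A d \<and> b \<in> A d)"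
  shows "spread {a, b} d = 0"
proof -
  have disjoint: "H d \<inter> A d = {}" using hap d unfolding HAP_table_def by blast
  have "m (Inr {H d, A d}) * m (Inl {a, b}) = 0" if m: "m \<in> S" for m
  proof (cases "m (Inr {H d, A d}) = 0")
    case False
    then have "m (Inl {a, b}) = 0"
      using PM_same_side[of m V "H d" "A d" a b] S(2) m disjoint side by blast
    then show ?thesis by simp
  qed simp
  then have "(\<Sum>m\<in>S. f m * m (Inr {H d, A d}) * m (Inl {a, b})) = 0"
    by (intro sum.neutral) (simp add: mult.assoc)
  then show ?thesis unfolding spread_def by simp
qed

lemma spread_in_P_GHA: "spread \<in> P_GHA V E r H A"
proof -
  have nonneg: "0 \<le> spread e d" for e d
    unfolding spread_def by (intro divide_nonneg_nonneg mult_nonneg_nonneg of_nat_0_le_iff)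
  have edge_one: "(\<Sum>d\<in>{1..r}. spread e d) = 1" if "e \<in> E" for e
    using spread_edge_sum[of e] that EK unfolding target_vector_def by auto
  show ?thesis
    unfolding P_GHA_def mem_Collect_eq
  proof (intro conjI)
    show "\<forall>e\<in>E. \<forall>d\<in>{1..r}. 0 \<le> spread e d \<and> spread e d \<le> 1"
      using edge_one nonneg by (metis member_le_sum finite_atLeastAtMost)
  qed (use edge_one spread_nonedge spread_vertex_sum spread_same_side in auto)
qed

end

lemma P_GHA_from_Nbar:
  assumes "finite V" "E \<subseteq> pairsK V" "HAP_table V r H A"
    and "target_vector V E r H A \<in> Nbar V (PM V)"
  shows "P_GHA V E r H A \<noteq> {}"
proof -
  obtain k S f where "1 \<le> k" "finite S" "S \<subseteq> PM V"
    and "\<And>i. k * target_vector V E r H A i = (\<Sum>m\<in>S. f m * m i)"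
    using assms(4) unfolding Nbar_def Ncomb_def by (auto simp: fun_eq_iff)
  then show ?thesis using spread_in_P_GHA[OF assms(1-3)] by blast
qed

theorem mainTheorem2:
  fixes V :: "'a set" and E :: "'a set set" and r :: nat
    and H A :: "nat \<Rightarrow> 'a set"
  assumes "finite V" and "even (card V)"
    and "regular_graph V E r"
    and "HAP_table V r H A"
  shows "P_GHA V E r H A \<noteq> {} \<longleftrightarrow>
    (\<exists>v \<in> Nbar V (PM V).
       (\<forall>e \<in> pairsK V. v (Inl e) = (if e \<in> E then 1 else 0)) \<and>
       (\<forall>c \<in> eq_parts V. v (Inr c) = card {d \<in> {1..r}. {H d, A d} = c}))"
proof -
  have EK: "E \<subseteq> pairsK V" using assms(3) unfolding regular_graph_def by blast
  have "P_GHA V E r H A \<noteq> {} \<longleftrightarrow> target_vector V E r H A \<in> Nbar V (PM V)"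
  proof
    assume "P_GHA V E r H A \<noteq> {}"
    then obtain x where "x \<in> P_GHA V E r H A" by blast
    then obtain y where y: "y \<in> P_GHA V E r H A" "\<forall>e d. y e d \<in> \<rat> \<and> 0 \<le> y e d"
        "\<forall>e d. (e, d) \<notin> pairsK V \<times> {1..r} \<longrightarrow> y e d = 0"
      by (rule P_GHA_rational_point[OF assms(1) EK])
    have "finite (pairsK V \<times> {1..r})" using finite_pairsK[OF assms(1)] by simp
    then obtain k w where k: "1 \<le> k"
        and w: "\<forall>i\<in>pairsK V \<times> {1..r}. real (w i) = real k * y (fst i) (snd i)"
      using scale_to_naturals[of _ "\<lambda>i. y (fst i) (snd i)"] y(2) by blast
    have "\<forall>e d. real (if (e, d) \<in> pairsK V \<times> {1..r} then w (e, d) else 0) = real k * y e d"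
      using w y(3) by auto
    then have "(\<lambda>i. k * target_vector V E r H A i) \<in> Ncomb (PM V)"
      by (rule scaled_target_in_Ncomb[OF assms(1,4) y(1,3)])
    moreover have "is_vec V (target_vector V E r H A)"
      unfolding is_vec_def coordsKC_def target_vector_def by (auto split: sum.split)
    ultimately show "target_vector V E r H A \<in> Nbar V (PM V)" using k unfolding Nbar_def by blast
  next
    assume "target_vector V E r H A \<in> Nbar V (PM V)"
    then show "P_GHA V E r H A \<noteq> {}" by (rule P_GHA_from_Nbar[OF assms(1) EK assms(4)])
  qed
  then show ?thesis unfolding Nbar_target_iff .
qed

end
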